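(* Let $d$ be an extended $K$-quasi-metric on $X$ with point at infinity $\infty$, let $o\in X\setminus\{\infty\}$ and let $d'=d_o$ be the involution of $d$ at $o$. Fix $\epsilon>0$. Then for every $\delta<\epsilon/K^2$ and every $\delta$-covering $\{B_{d,r_i}(x_i)\}_i$ of $X\setminus\{\infty\}$, some subfamily of $\{B_{d',K^3r_i/\epsilon^2}(x_i)\}_i$ is a $\frac{K^3}{\epsilon^2}\delta$-covering of $X\setminus(\{\infty\}\cup B_{d,\epsilon}(o))$.
   Context: A $K$-quasi-metric ($K\ge1$) is a symmetric map $d:X\times X\to[0,\infty)$ with $d(x,y)=0\iff x=y$ and $d(x,y)\le K\max(d(x,z),d(z,y))$; it is extended with point at infinity $\infty\in X$ if $d(x,\infty)=\infty$ for $x\neq\infty$ and all other distances are finite (with the same axioms). The involution at $o\ne\infty$: $d_o(x,x)=0$, $d_o(x,y)=\frac{d(x,y)}{d(x,o)d(o,y)}$ for distinct $x,y\ne\infty$, $d_o(\infty,y)=1/d(o,y)$, $d_o(x,\infty)=1/d(x,o)$ for distinct points, with $\lambda/0=\infty$ for $\lambda>0$. For a distance $\rho$ on $X$, $B_{\rho,r}(x)=\{y\in X:\rho(x,y)\le r\}$ is the closed ball. A $\delta$-covering of a set $A$ with respect to $\rho$ is a family of closed $\rho$-balls $B_{\rho,r_i}(x_i)$ with $r_i\le\delta$ whose union contains $A$. *)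

theory Defs
  imports "HOL-Analysis.Analysis"
begin

text \<open>Distances take values in [0,\<infinity>] (type ennreal); in ennreal, x / 0 = \<infinity> for x > 0.\<close>

definition quasi_metric :: "real \<Rightarrow> 'a set \<Rightarrow> ('a \<Rightarrow> 'a \<Rightarrow> ennreal) \<Rightarrow> bool" where
  "quasi_metric K X d \<longleftrightarrow> K \<ge> 1 \<and>
     (\<forall>x\<in>X. \<forall>y\<in>X. d x y = d y x) \<and>
     (\<forall>x\<in>X. \<forall>y\<in>X. d x y = 0 \<longleftrightarrow> x = y) \<and>
     (\<forall>x\<in>X. \<forall>y\<in>X. \<forall>z\<in>X. d x y \<le> ennreal K * max (d x z) (d z y))"

definition ext_quasi_metric :: "real \<Rightarrow> 'a set \<Rightarrow> ('a \<Rightarrow> 'a \<Rightarrow> ennreal) \<Rightarrow> 'a \<Rightarrow> bool" where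
  "ext_quasi_metric K X d pinf \<longleftrightarrow> quasi_metric K X d \<and> pinf \<in> X \<and>
     (\<forall>x\<in>X. x \<noteq> pinf \<longrightarrow> d x pinf = \<infinity>) \<and>
     (\<forall>x\<in>X - {pinf}. \<forall>y\<in>X - {pinf}. d x y < \<infinity>)"

definition involution :: "('a \<Rightarrow> 'a \<Rightarrow> ennreal) \<Rightarrow> 'a \<Rightarrow> 'a \<Rightarrow> 'a \<Rightarrow> 'a \<Rightarrow> ennreal" where
  "involution d pinf p0 x y =
     (if x = y then 0
      else if x = pinf then 1 / d p0 y
      else if y = pinf then 1 / d x p0
      else d x y / (d x p0 * d p0 y))"

definition cball_d :: "('a \<Rightarrow> 'a \<Rightarrow> ennreal) \<Rightarrow> 'a set \<Rightarrow> real \<Rightarrow> 'a \<Rightarrow> 'a set" where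
  "cball_d \<rho> X r x = {y\<in>X. 0 \<le> r \<and> \<rho> x y \<le> ennreal r}"

definition is_covering ::
  "('a \<Rightarrow> 'a \<Rightarrow> ennreal) \<Rightarrow> 'a set \<Rightarrow> real \<Rightarrow> 'a set \<Rightarrow> 'i set \<Rightarrow> ('i \<Rightarrow> 'a) \<Rightarrow> ('i \<Rightarrow> real) \<Rightarrow> bool" where
  "is_covering \<rho> X \<delta> A I c r \<longleftrightarrow>
     (\<forall>i\<in>I. c i \<in> X \<and> r i \<le> \<delta>) \<and> A \<subseteq> (\<Union>i\<in>I. cball_d \<rho> X (r i) (c i))"

end

theory Submission
  imports Defs
begin

text \<open>A point y far from the base point o, compared with its distance to a centre x of small
  radius, forces x itself to be far from o: in the quasi-triangle inequality for d(o,y) through x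
  the term d(x,y) cannot be the maximum. Hence d(x,o) \<ge> \<epsilon>/K and d(o,y) > \<epsilon>, so the
  involution d(x,y)/(d(x,o) d(o,y)) is at most K r/\<epsilon>^2, and K \<le> K^3.\<close>

lemma quasi_metric_sym:
  "quasi_metric K X d \<Longrightarrow> x \<in> X \<Longrightarrow> y \<in> X \<Longrightarrow> d x y = d y x"
  unfolding quasi_metric_def by blast

lemma quasi_metric_far_point:
  assumes "quasi_metric K X d" "p \<in> X" "x \<in> X" "y \<in> X"
    and "ennreal K * d x y < d p y"
  shows "d p y \<le> ennreal K * d p x"
proof -
  have "d p y \<le> ennreal K * max (d p x) (d x y)"
    using assms(1-4) unfolding quasi_metric_def by blast
  with assms(5) show ?thesis
    by (auto simp: max_def split: if_splits)
qed

lemma ext_quasi_metric_finite: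
  assumes "ext_quasi_metric K X d pinf" "x \<in> X - {pinf}" "y \<in> X - {pinf}"
  shows "d x y = ennreal (enn2real (d x y))"
  using assms unfolding ext_quasi_metric_def by (simp add: less_top)

lemma ext_quasi_metric_center_ne_pinf:
  assumes "ext_quasi_metric K X d pinf" "x \<in> X" "y \<in> X - {pinf}" "d x y \<le> ennreal r"
  shows "x \<noteq> pinf"
proof
  assume "x = pinf"
  then have "d x y = \<infinity>"
    using assms(1,3) quasi_metric_sym[of K X d pinf y] unfolding ext_quasi_metric_def by auto
  with assms(4) show False by (simp add: top_unique)
qed

lemma ext_quasi_metric_far_center:
  assumes "ext_quasi_metric K X d pinf" "p \<in> X - {pinf}" "x \<in> X - {pinf}" "y \<in> X - {pinf}"
    and "d x y \<le> ennreal s" "0 \<le> s" "K * s < e" "ennreal e < d p y"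
  shows "ennreal (e / K) \<le> d x p"
proof -
  have qm: "quasi_metric K X d" and K: "K \<ge> 1"
    using assms(1) unfolding ext_quasi_metric_def quasi_metric_def by auto
  have "ennreal K * d x y \<le> ennreal (K * s)"
    using assms(5,6) K by (simp add: ennreal_mult mult_left_mono)
  also have "\<dots> \<le> ennreal e"
    using assms(7) by (simp add: ennreal_leI)
  also have "\<dots> < d p y"
    by (fact assms(8))
  finally have "d p y \<le> ennreal K * d p x"
    using quasi_metric_far_point[OF qm] assms(2-4) by blast
  moreover have "d p x = ennreal (enn2real (d x p))"
    using ext_quasi_metric_finite[OF assms(1,3,2)] quasi_metric_sym[OF qm, of p x] assms(2,3)
    by simp
  ultimately have "ennreal e \<le> ennreal (K * enn2real (d x p))"
    using assms(8) K by (simp add: ennreal_mult)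
  then have "e \<le> K * enn2real (d x p)"
    using K by (simp add: ennreal_le_iff)
  then have "e / K \<le> enn2real (d x p)"
    using K by (simp add: divide_le_eq mult.commute)
  then show ?thesis
    using ext_quasi_metric_finite[OF assms(1,3,2)] ennreal_leI by fastforce
qed

lemma involution_le_divide:
  assumes "ext_quasi_metric K X d pinf" "p \<in> X - {pinf}" "x \<in> X - {pinf}" "y \<in> X - {pinf}"
    and "d x y \<le> ennreal s" "ennreal t \<le> d x p" "ennreal u \<le> d p y"
    and "0 \<le> s" "0 < t" "0 < u"
  shows "involution d pinf p x y \<le> ennreal (s / (t * u))"
proof (cases "x = y")
  case False
  define a b e where "a = enn2real (d x y)" "b = enn2real (d x p)" "e = enn2real (d p y)"
  have da: "d x y = ennreal a" and db: "d x p = ennreal b" and de: "d p y = ennreal e"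
    unfolding a_b_e_def using ext_quasi_metric_finite[OF assms(1)] assms(2-4) by blast+
  have nonneg: "0 \<le> a" "0 \<le> b" "0 \<le> e"
    unfolding a_b_e_def by simp_all
  have "a \<le> s" "t \<le> b" "u \<le> e"
    using assms(5-10) da db de nonneg by (simp_all add: ennreal_le_iff)
  then have "a / (b * e) \<le> s / (t * u)"
    using assms(8-10) nonneg(1) by (intro frac_le mult_mono) auto
  moreover have "involution d pinf p x y = ennreal (a / (b * e))"
    using False assms(3,4,9,10) \<open>t \<le> b\<close> \<open>u \<le> e\<close> nonneg da db de
    by (simp add: involution_def ennreal_mult'[symmetric] divide_ennreal)
  ultimately show ?thesis
    by (simp add: ennreal_leI)
qed (simp add: involution_def)

lemma cball_d_mono: "0 \<le> r \<Longrightarrow> r \<le> s \<Longrightarrow> cball_d \<rho> X r x \<subseteq> cball_d \<rho> X s x"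
  unfolding cball_d_def by (auto intro: order_trans ennreal_leI)

lemma mem_involution_cball:
  assumes "ext_quasi_metric K X d pinf" "p \<in> X - {pinf}" "x \<in> X" "y \<in> X - {pinf}"
    and "d x y \<le> ennreal r" "0 \<le> r" "K * r < \<epsilon>" "ennreal \<epsilon> < d p y"
  shows "y \<in> cball_d (involution d pinf p) X (K * r / \<epsilon>\<^sup>2) x"
proof -
  have K: "K \<ge> 1"
    using assms(1) unfolding ext_quasi_metric_def quasi_metric_def by auto
  have \<epsilon>: "\<epsilon> > 0"
    using assms(6,7) K mult_nonneg_nonneg[of K r] by linarith
  have x: "x \<in> X - {pinf}"
    using ext_quasi_metric_center_ne_pinf[OF assms(1,3,4,5)] assms(3) by blast
  have "ennreal (\<epsilon> / K) \<le> d x p"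
    using ext_quasi_metric_far_center[OF assms(1,2) x assms(4-8)] .
  moreover have "ennreal \<epsilon> \<le> d p y"
    using assms(8) by simp
  ultimately have "involution d pinf p x y \<le> ennreal (r / (\<epsilon> / K * \<epsilon>))"
    using assms(6) \<epsilon> K by (intro involution_le_divide[OF assms(1,2) x assms(4,5)]) auto
  also have "r / (\<epsilon> / K * \<epsilon>) = K * r / \<epsilon>\<^sup>2"
    using K by (simp add: power2_eq_square)
  finally show ?thesis
    using assms(4,6) K \<epsilon> by (simp add: cball_d_def)
qed

theorem lemma2p2:
  fixes X :: "'a set" and d :: "'a \<Rightarrow> 'a \<Rightarrow> ennreal" and K \<epsilon> \<delta> :: real
    and pinf p0 :: 'a and I :: "'i set" and c :: "'i \<Rightarrow> 'a" and r :: "'i \<Rightarrow> real"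
  assumes "ext_quasi_metric K X d pinf"
    and "p0 \<in> X" and "p0 \<noteq> pinf"
    and "\<epsilon> > 0"
    and "\<delta> < \<epsilon> / K^2"
    and "is_covering d X \<delta> (X - {pinf}) I c r"
  shows "\<exists>J\<subseteq>I. is_covering (involution d pinf p0) X (K^3 / \<epsilon>^2 * \<delta>)
            (X - ({pinf} \<union> cball_d d X \<epsilon> p0)) J c (\<lambda>i. K^3 * r i / \<epsilon>^2)"
proof (intro exI[of _ I] conjI subset_refl)
  have K: "K \<ge> 1"
    using assms(1) unfolding ext_quasi_metric_def quasi_metric_def by auto
  have cover: "\<forall>i\<in>I. c i \<in> X \<and> r i \<le> \<delta>" "X - {pinf} \<subseteq> (\<Union>i\<in>I. cball_d d X (r i) (c i))"
    using assms(6) unfolding is_covering_def by auto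
  have K_le_K3: "K \<le> K^3"
    using power_increasing[of 1 3 K] K by simp
  have small_radius: "K * r i < \<epsilon>" if "i \<in> I" for i
  proof -
    have "K * r i \<le> K * \<delta>"
      using cover(1) that K by simp
    also have "\<dots> < \<epsilon> / K"
      using assms(5) K by (simp add: field_simps power2_eq_square)
    also have "\<dots> \<le> \<epsilon>"
      using assms(4) K by (simp add: divide_le_eq)
    finally show ?thesis .
  qed
  show "is_covering (involution d pinf p0) X (K^3 / \<epsilon>^2 * \<delta>)
          (X - ({pinf} \<union> cball_d d X \<epsilon> p0)) I c (\<lambda>i. K^3 * r i / \<epsilon>^2)"
    unfolding is_covering_def
  proof (intro conjI ballI subsetI)
    fix i assume "i \<in> I"
    then have "c i \<in> X" "r i \<le> \<delta>"
      using cover(1) by auto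
    then show "c i \<in> X" "K^3 * r i / \<epsilon>\<^sup>2 \<le> K^3 / \<epsilon>\<^sup>2 * \<delta>"
      using K by (simp_all add: divide_right_mono)
  next
    fix y assume y: "y \<in> X - ({pinf} \<union> cball_d d X \<epsilon> p0)"
    then obtain i where i: "i \<in> I" and "y \<in> cball_d d X (r i) (c i)"
      using cover(2) by blast
    then have "d (c i) y \<le> ennreal (r i)" "0 \<le> r i"
      by (auto simp: cball_d_def)
    moreover have "ennreal \<epsilon> < d p0 y"
      using y assms(4) by (auto simp: cball_d_def)
    ultimately have "y \<in> cball_d (involution d pinf p0) X (K * r i / \<epsilon>\<^sup>2) (c i)"
      using assms(2,3) y cover(1) i
      by (intro mem_involution_cball[OF assms(1)] small_radius) auto
    also have "\<dots> \<subseteq> cball_d (involution d pinf p0) X (K^3 * r i / \<epsilon>\<^sup>2) (c i)"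
      using K K_le_K3 \<open>0 \<le> r i\<close>
      by (intro cball_d_mono divide_right_mono mult_right_mono) simp_all
    finally show "y \<in> (\<Union>i\<in>I. cball_d (involution d pinf p0) X (K^3 * r i / \<epsilon>\<^sup>2) (c i))"
      using i by blast
  qed
qed

end
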